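(* Let $n\ge1$ and $0\le j\le n$. Then \[ \sum_{m=1}^\infty\frac{e_j(m)h_{n-j}(m)}{m^2}=\begin{cases}(n+1)\zeta(n+2), & j=0,\\ \displaystyle\sum_{p=j}^n\binom{p-1}{j-1}S^T_{n+2,p}+\binom{n+1}{j+1}\zeta(n+2), & j\ge1.\end{cases} \]
   Context: For a symmetric function $u$ and $m\ge1$, $u(m)$ denotes $u$ evaluated at $x_r=1/r$ for $r\le m$ and $x_r=0$ for $r>m$; $e_j$, $h_i$ are the elementary and complete symmetric functions. Equivalently $e_j(m)=P_j(H_m,\dots,H_m^{(j)})$ and $h_i(m)=Q_i(H_m,\dots,H_m^{(i)})$ with $H_m^{(r)}=\sum_{t=1}^m t^{-r}$. Multiple zeta values: $\zeta(a_1,\dots,a_k)=\sum_{n_1>\cdots>n_k\ge1}n_1^{-a_1}\cdots n_k^{-a_k}$ for positive integers with $a_1\ge2$; weight is $a_1+\dots+a_k$, depth is $k$. For $N\ge2$ and $1\le k<N$, $S^T_{N,k}$ denotes the sum of all multiple zeta values $\zeta(a_1,\dots,a_k)$ of weight $N$ and depth $k$ with $a_1\ge3$. *)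

theory Defs
  imports "HOL-Analysis.Analysis" "HOL-Library.Multiset"
begin

text \<open>e_j(m): elementary symmetric function e_j evaluated at x_r = 1/r (r \<le> m), x_r = 0 (r > m).\<close>
definition esym :: "nat \<Rightarrow> nat \<Rightarrow> real" where
  "esym j m = (\<Sum>S\<in>{S. S \<subseteq> {1..m} \<and> card S = j}. \<Prod>r\<in>S. 1 / real r)"

text \<open>h_i(m): complete homogeneous symmetric function h_i at the same point.\<close>
definition hsym :: "nat \<Rightarrow> nat \<Rightarrow> real" where
  "hsym i m = (\<Sum>M\<in>{M. set_mset M \<subseteq> {1..m} \<and> size M = i}.
                 \<Prod>r\<in>#M. 1 / real r)"

definition mzv :: "nat list \<Rightarrow> real" where
  "mzv a = infsum (\<lambda>ns. \<Prod>i<length a. 1 / real (ns ! i) ^ (a ! i))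
      {ns. length ns = length a \<and> sorted_wrt (>) ns \<and> (\<forall>x\<in>set ns. x \<ge> 1)}"

definition ST :: "nat \<Rightarrow> nat \<Rightarrow> real" where
  "ST N k = (\<Sum>a\<in>{a. length a = k \<and> (\<forall>x\<in>set a. x \<ge> 1) \<and> sum_list a = N \<and> a \<noteq> [] \<and> hd a \<ge> 3}.
               mzv a)"

end

theory Submission
  imports Defs "HOL-Real_Asymp.Real_Asymp"
begin

text \<open>
  Expanding by compositions, e_j h_i = \<Sum>_p C(p,j) \<Sum>_c M_c, where c runs over the compositions of
  i + j into p parts and M_c is the monomial quasi-symmetric function. Split M_c(m) according to
  whether the largest index equals m. After dividing by m^2 and summing over m, the part with
  largest index m contributes MZVs of weight n + 2, depth p and first entry c_1 + 2 \<ge> 3, i.e.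
  S^T_{n+2,p}; the rest contributes the MZVs (2, c), of depth p + 1 and first entry 2, which by the
  sum theorem add up to \<zeta>(n+2) - S^T_{n+2,p+1}. Abel summation in p then gives the formula.

  The sum theorem (the admissible MZVs of weight w and depth d < w add up to \<zeta>(w)) is proved by
  comparing generating functions: for 0 < x < 1 both \<Sum>_a \<zeta>(a) x^wt(a) over depth d and
  \<Sum>_{w>d} \<zeta>(w) x^w equal x^(d+1) \<Sum>_m 1/(m^d (m - x)). For the left side, summing the geometric
  series in the exponents leaves sums of \<Prod> 1/(n_i - x) over decreasing tuples, which are moved to
  the right side by the connector \<Prod>_{i\<le>n} (i - x)/(i - x + m): it telescopes both in n and in m.
\<close>

lemma has_sum_Sigma_nonneg:
  fixes f :: "'a \<times> 'b \<Rightarrow> real"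
  assumes "\<And>a b. a \<in> A \<Longrightarrow> b \<in> B a \<Longrightarrow> f (a, b) \<ge> 0"
    and "\<And>a. a \<in> A \<Longrightarrow> ((\<lambda>b. f (a, b)) has_sum g a) (B a)"
    and "(g has_sum S) A"
  shows "(f has_sum S) (Sigma A B)"
proof -
  have "f summable_on Sigma A B"
    using assms by (intro summable_on_SigmaI[where g = g] has_sum_imp_summable) auto
  then show ?thesis
    using assms by (intro has_sum_SigmaI[where g = g])
qed

lemma has_sum_sum:
  fixes f :: "'i \<Rightarrow> 'a \<Rightarrow> 'b::topological_comm_monoid_add"
  assumes "finite I" "\<And>i. i \<in> I \<Longrightarrow> (f i has_sum s i) A"
  shows "((\<lambda>x. \<Sum>i\<in>I. f i x) has_sum (\<Sum>i\<in>I. s i)) A"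
  using assms by (induction I rule: finite_induct) (simp_all add: has_sum_add)

lemma sum_atMost_eq_head_plus: "(\<Sum>t\<le>i. f t) = f 0 + (\<Sum>t\<in>{1..i}. f t)"
  for f :: "nat \<Rightarrow> 'a::comm_monoid_add"
  by (simp add: sum.atMost_shift sum.atLeast1_atMost_eq)

lemma sums_shift_imp_has_sum_atLeast:
  fixes f :: "nat \<Rightarrow> real"
  assumes "(\<lambda>k. f (k + a)) sums s" "\<And>n. n \<ge> a \<Longrightarrow> f n \<ge> 0"
  shows "(f has_sum s) {a..}"
proof -
  have "((\<lambda>k. f (k + a)) has_sum s) UNIV"
    using assms by (intro sums_nonneg_imp_has_sum) auto
  moreover have "bij_betw (\<lambda>k. k + a) UNIV {a..}"
    by (rule bij_betwI[where g = "\<lambda>n. n - a"]) auto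
  ultimately show ?thesis
    using has_sum_reindex_bij_betw by blast
qed

lemma has_sum_geometric_from:
  fixes q :: real
  assumes "0 \<le> q" "q < 1"
  shows "((\<lambda>k. q ^ k) has_sum q ^ d / (1 - q)) {d..}"
proof (rule sums_shift_imp_has_sum_atLeast)
  have "(\<lambda>k. q ^ d * q ^ k) sums (q ^ d * (1 / (1 - q)))"
    using assms by (intro sums_mult geometric_sums) auto
  then show "(\<lambda>k. q ^ (k + d)) sums (q ^ d / (1 - q))"
    by (simp add: power_add mult.commute)
qed (use assms in simp)

lemma powser_coeffs_unique:
  fixes c c' :: "nat \<Rightarrow> real"
  assumes "r > 0"
    and "\<And>y. 0 < y \<Longrightarrow> y \<le> r \<Longrightarrow> (\<lambda>k. c k * y ^ k) sums S y"
    and "\<And>y. 0 < y \<Longrightarrow> y \<le> r \<Longrightarrow> (\<lambda>k. c' k * y ^ k) sums S y"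
  shows "c = c'"
proof -
  define e where "e k = c k - c' k" for k
  have e_sums: "(\<lambda>k. e k * y ^ k) sums 0" if "0 < y" "y \<le> r" for y
    using sums_diff[OF assms(2,3)[OF that]] by (simp add: e_def algebra_simps)
  have "e k = 0" for k
  proof (induction k rule: less_induct)
    case (less k)
    have tail_sums: "(\<lambda>i. e (i + k) * y ^ i) sums 0" if y: "0 < y" "y \<le> r" for y
    proof -
      have "(\<lambda>i. e (i + k) * y ^ (i + k)) sums 0"
        using sums_split_initial_segment[OF e_sums[OF y], of k] less by simp
      then have "(\<lambda>i. (1 / y ^ k) * (e (i + k) * y ^ (i + k))) sums ((1 / y ^ k) * 0)"
        by (rule sums_mult)
      moreover have "(1 / y ^ k) * (e (i + k) * y ^ (i + k)) = e (i + k) * y ^ i" for i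
        using y by (simp add: power_add)
      ultimately show ?thesis by simp
    qed
    define G where "G y = (\<Sum>i. e (i + k) * y ^ i)" for y :: real
    have "summable (\<lambda>i. e (i + k) * r ^ i)"
      using tail_sums[OF \<open>r > 0\<close> order.refl] by (simp add: sums_iff)
    then have "isCont G 0"
      unfolding G_def by (rule isCont_powser) (use \<open>r > 0\<close> in simp)
    then have "(G \<longlongrightarrow> e k) (at_right 0)"
      by (simp add: G_def isCont_def filterlim_at_split powser_zero[of "\<lambda>i. e (i + k)"])
    moreover have "eventually (\<lambda>y. G y = 0) (at_right (0::real))"
      unfolding eventually_at_right[OF \<open>r > 0\<close>]
      using tail_sums \<open>r > 0\<close> by (auto simp: G_def sums_iff intro!: exI[of _ r])
    then have "(G \<longlongrightarrow> 0) (at_right 0)"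
      by (rule tendsto_eventually)
    ultimately show ?case
      using tendsto_unique[OF trivial_limit_at_right_real] by blast
  qed
  then show ?thesis by (auto simp: e_def)
qed

lemma sum_Cons_set:
  assumes "finite A" "\<And>a. a \<in> A \<Longrightarrow> finite (B a)"
  shows "(\<Sum>l\<in>{l. l \<noteq> [] \<and> hd l \<in> A \<and> tl l \<in> B (hd l)}. F l) = (\<Sum>a\<in>A. \<Sum>b\<in>B a. F (a # b))"
proof -
  have "{l. l \<noteq> [] \<and> hd l \<in> A \<and> tl l \<in> B (hd l)} = (\<lambda>(a, b). a # b) ` (SIGMA a:A. B a)"
    by (auto simp: image_iff intro!: bexI[where x = "(hd l, tl l)" for l]) (metis list.collapse)
  moreover have "inj_on (\<lambda>(a, b). a # b) (SIGMA a:A. B a)"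
    by (auto simp: inj_on_def)
  ultimately show ?thesis
    using assms by (simp add: sum.reindex sum.Sigma case_prod_unfold)
qed

lemma has_sum_Cons_iff:
  fixes F :: "'a list \<Rightarrow> real"
  assumes "\<And>a. a \<in> A \<Longrightarrow> finite (B a)"
    and "\<And>l. l \<noteq> [] \<Longrightarrow> hd l \<in> A \<Longrightarrow> tl l \<in> B (hd l) \<Longrightarrow> F l \<ge> 0"
  shows "(F has_sum S) {l. l \<noteq> [] \<and> hd l \<in> A \<and> tl l \<in> B (hd l)} \<longleftrightarrow>
         ((\<lambda>a. \<Sum>b\<in>B a. F (a # b)) has_sum S) A"
proof -
  have "(F has_sum S) {l. l \<noteq> [] \<and> hd l \<in> A \<and> tl l \<in> B (hd l)} \<longleftrightarrow>
        ((\<lambda>(a, b). F (a # b)) has_sum S) (SIGMA a:A. B a)"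
    by (rule has_sum_reindex_bij_witness[where i = "\<lambda>(a, b). a # b" and j = "\<lambda>l. (hd l, tl l)"]) auto
  also have "\<dots> \<longleftrightarrow> ((\<lambda>a. \<Sum>b\<in>B a. F (a # b)) has_sum S) A"
  proof
    assume "((\<lambda>(a, b). F (a # b)) has_sum S) (SIGMA a:A. B a)"
    then show "((\<lambda>a. \<Sum>b\<in>B a. F (a # b)) has_sum S) A"
      by (rule has_sum_SigmaD) (use assms(1) in auto)
  next
    assume "((\<lambda>a. \<Sum>b\<in>B a. F (a # b)) has_sum S) A"
    then show "((\<lambda>(a, b). F (a # b)) has_sum S) (SIGMA a:A. B a)"
      by (rule has_sum_Sigma_nonneg[rotated 2]) (use assms in auto)
  qed
  finally show ?thesis .
qed

lemma has_sum_Cons_mult: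
  fixes f :: "'a \<Rightarrow> real" and g :: "'a list \<Rightarrow> real"
  assumes "(f has_sum F) A" "(g has_sum G) B"
    and "\<And>a. a \<in> A \<Longrightarrow> f a \<ge> 0" "\<And>b. b \<in> B \<Longrightarrow> g b \<ge> 0"
  shows "((\<lambda>l. f (hd l) * g (tl l)) has_sum F * G) {l. l \<noteq> [] \<and> hd l \<in> A \<and> tl l \<in> B}"
proof -
  have "((\<lambda>(a, b). f a * g b) has_sum F * G) (SIGMA a:A. B)"
    by (rule has_sum_Sigma_nonneg[where g = "\<lambda>a. f a * G"])
      (use assms in \<open>auto intro!: has_sum_cmult_right has_sum_cmult_left\<close>)
  then show ?thesis
    by (subst has_sum_reindex_bij_witness[where i = "\<lambda>(a, b). a # b" and j = "\<lambda>l. (hd l, tl l)"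
          and T = "SIGMA a:A. B" and h = "\<lambda>(a, b). f a * g b"]) auto
qed

definition pos_lists :: "nat \<Rightarrow> nat list set" where
  "pos_lists k = {b. length b = k \<and> (\<forall>x\<in>set b. x \<ge> 1)}"

definition admissible :: "nat \<Rightarrow> nat list set" where
  "admissible d = {a \<in> pos_lists d. a \<noteq> [] \<and> hd a \<ge> 2}"

definition admissible_weight :: "nat \<Rightarrow> nat \<Rightarrow> nat list set" where
  "admissible_weight w d = {a \<in> admissible d. sum_list a = w}"

definition compositions :: "nat \<Rightarrow> nat \<Rightarrow> nat list set" where
  "compositions w p = {c \<in> pos_lists p. sum_list c = w}"

definition dec_tuples :: "nat \<Rightarrow> nat list set" where
  "dec_tuples p = {ns. length ns = p \<and> sorted_wrt (>) ns \<and> (\<forall>x\<in>set ns. x \<ge> 1)}"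

definition dec_tuples_le :: "nat \<Rightarrow> nat \<Rightarrow> nat list set" where
  "dec_tuples_le m p = {ns. length ns = p \<and> sorted_wrt (>) ns \<and> (\<forall>x\<in>set ns. 1 \<le> x \<and> x \<le> m)}"

definition zeta_term :: "real \<Rightarrow> nat list \<Rightarrow> nat list \<Rightarrow> real" where
  "zeta_term y a ns = (\<Prod>i<length a. (y / real (ns ! i)) ^ (a ! i))"

lemma pos_lists_0 [simp]: "pos_lists 0 = {[]}"
  by (auto simp: pos_lists_def)

lemma pos_lists_Suc: "pos_lists (Suc k) = {l. l \<noteq> [] \<and> hd l \<in> {1..} \<and> tl l \<in> pos_lists k}"
  by (rule set_eqI, case_tac x) (auto simp: pos_lists_def)

lemma admissible_Suc: "admissible (Suc k) = {l. l \<noteq> [] \<and> hd l \<in> {2..} \<and> tl l \<in> pos_lists k}"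
  by (rule set_eqI, case_tac x) (auto simp: admissible_def pos_lists_def)

lemma compositions_0: "compositions w 0 = (if w = 0 then {[]} else {})"
  by (auto simp: compositions_def pos_lists_def)

lemma compositions_Suc:
  "compositions w (Suc p) = {l. l \<noteq> [] \<and> hd l \<in> {1..w} \<and> tl l \<in> compositions (w - hd l) p}"
  by (rule set_eqI, case_tac x) (auto simp: compositions_def pos_lists_def)

lemma length_le_sum_list: "\<forall>x\<in>set c. x \<ge> (1::nat) \<Longrightarrow> length c \<le> sum_list c"
  by (induction c) auto

lemma compositions_empty: "w < p \<Longrightarrow> compositions w p = {}"
  using length_le_sum_list by (fastforce simp: compositions_def pos_lists_def)

lemma finite_lists_bounded_sum: "finite {l :: nat list. length l = p \<and> sum_list l = w}"
proof (rule finite_subset)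
  show "{l. length l = p \<and> sum_list l = w} \<subseteq> {l. set l \<subseteq> {0..w} \<and> length l = p}"
    by (auto dest: member_le_sum_list)
qed (rule finite_lists_length_eq, simp)

lemma finite_compositions: "finite (compositions w p)"
  by (rule finite_subset[OF _ finite_lists_bounded_sum[of p w]])
    (auto simp: compositions_def pos_lists_def)

lemma finite_admissible_weight: "finite (admissible_weight w d)"
  by (rule finite_subset[OF _ finite_lists_bounded_sum[of d w]])
    (auto simp: admissible_weight_def admissible_def pos_lists_def)

lemma dec_tuples_le_0 [simp]: "dec_tuples_le m 0 = {[]}"
  by (auto simp: dec_tuples_le_def)

lemma dec_tuples_le_0_Suc: "dec_tuples_le 0 (Suc q) = {}"
  by (auto simp: dec_tuples_le_def length_Suc_conv)

lemma dec_tuples_Suc: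
  "dec_tuples (Suc p) = {l. l \<noteq> [] \<and> hd l \<in> {1..} \<and> tl l \<in> dec_tuples_le (hd l - 1) p}"
  by (rule set_eqI, case_tac x) (auto simp: dec_tuples_def dec_tuples_le_def)

lemma dec_tuples_le_Suc:
  "dec_tuples_le m (Suc p) = {l. l \<noteq> [] \<and> hd l \<in> {1..m} \<and> tl l \<in> dec_tuples_le (hd l - 1) p}"
  by (rule set_eqI, case_tac x) (auto simp: dec_tuples_le_def)

lemma finite_dec_tuples_le: "finite (dec_tuples_le m p)"
proof (rule finite_subset)
  show "dec_tuples_le m p \<subseteq> {ns. set ns \<subseteq> {1..m} \<and> length ns = p}"
    by (auto simp: dec_tuples_le_def)
qed (rule finite_lists_length_eq, simp)

lemma sum_dec_tuples_le_Suc_split: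
  "(\<Sum>ns\<in>dec_tuples_le (Suc m) (Suc q). F ns)
     = (\<Sum>ns\<in>dec_tuples_le m (Suc q). F ns) + (\<Sum>ms\<in>dec_tuples_le m q. F (Suc m # ms))"
proof -
  have "(\<Sum>ns\<in>dec_tuples_le (Suc m) (Suc q). F ns)
      = (\<Sum>l\<in>insert (Suc m) {1..m}. \<Sum>ms\<in>dec_tuples_le (l - 1) q. F (l # ms))"
    unfolding dec_tuples_le_Suc by (subst sum_Cons_set) (auto simp: finite_dec_tuples_le atLeastAtMostSuc_conv)
  also have "\<dots> = (\<Sum>ms\<in>dec_tuples_le m q. F (Suc m # ms))
                 + (\<Sum>l\<in>{1..m}. \<Sum>ms\<in>dec_tuples_le (l - 1) q. F (l # ms))"
    by (subst sum.insert) auto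
  also have "(\<Sum>l\<in>{1..m}. \<Sum>ms\<in>dec_tuples_le (l - 1) q. F (l # ms))
           = (\<Sum>ns\<in>dec_tuples_le m (Suc q). F ns)"
    unfolding dec_tuples_le_Suc by (rule sum_Cons_set[symmetric]) (auto simp: finite_dec_tuples_le)
  finally show ?thesis by (simp add: add.commute)
qed

lemma zeta_term_Nil [simp]: "zeta_term y [] ns = 1"
  by (simp add: zeta_term_def)

lemma zeta_term_Cons: "zeta_term y (a # as) (n # ns) = (y / real n) ^ a * zeta_term y as ns"
  unfolding zeta_term_def length_Cons prod.lessThan_Suc_shift by simp

lemma zeta_term_nonneg: "y \<ge> 0 \<Longrightarrow> zeta_term y a ns \<ge> 0"
  unfolding zeta_term_def by (intro prod_nonneg) auto

lemma zeta_term_scale: "zeta_term y a ns = y ^ sum_list a * zeta_term 1 a ns"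
proof -
  have "zeta_term y a ns = (\<Prod>i<length a. y ^ (a ! i)) * zeta_term 1 a ns"
    unfolding zeta_term_def prod.distrib[symmetric]
    by (intro prod.cong refl) (simp add: power_mult_distrib[symmetric])
  also have "(\<Prod>i<length a. y ^ (a ! i)) = y ^ sum_list a"
    by (simp add: power_sum sum_list_sum_nth atLeast0LessThan)
  finally show ?thesis .
qed

lemma mzv_eq_infsum_zeta_term: "mzv a = infsum (zeta_term 1 a) (dec_tuples (length a))"
  unfolding mzv_def zeta_term_def dec_tuples_def by (simp add: power_one_over)

section \<open>The connector\<close>

definition connector :: "real \<Rightarrow> nat \<Rightarrow> nat \<Rightarrow> real" where
  "connector x n m = (\<Prod>i=1..n. (real i - x) / (real i - x + real m))"

fun shifted_esym :: "real \<Rightarrow> nat \<Rightarrow> nat \<Rightarrow> real" where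
  "shifted_esym x 0 n = 1"
| "shifted_esym x (Suc k) n = (\<Sum>l\<in>{1..<n}. shifted_esym x k l / (real l - x))"

context
  fixes x :: real
  assumes x_lt_1: "x < 1"
begin

lemma connector_left_0 [simp]: "connector x 0 m = 1"
  by (simp add: connector_def)

lemma connector_right_0 [simp]: "connector x n 0 = 1"
  unfolding connector_def using x_lt_1 by (intro prod.neutral) auto

lemma connector_Suc_left:
  "connector x (Suc n) m = connector x n m * ((real (Suc n) - x) / (real (Suc n) - x + real m))"
  unfolding connector_def by (simp add: prod.nat_ivl_Suc')

lemma connector_nonneg: "0 \<le> connector x n m"
  unfolding connector_def using x_lt_1 by (intro prod_nonneg) auto

lemma connector_1_left: "connector x 1 m = (1 - x) / (1 - x + real m)"
  by (simp add: connector_def)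

lemma connector_1_right: "connector x n 1 = (1 - x) / (real n + 1 - x)"
proof (induction n)
  case (Suc n)
  define a where "a = real n + 1 - x"
  have "a > 0"
    using x_lt_1 by (simp add: a_def)
  have "connector x (Suc n) 1 = connector x n 1 * (a / (a + 1))"
    by (simp add: connector_Suc_left a_def add_ac)
  also have "\<dots> = (1 - x) / a * (a / (a + 1))"
    unfolding Suc.IH by (simp add: a_def)
  also have "\<dots> = (1 - x) / (a + 1)"
    using \<open>a > 0\<close> by simp
  finally show ?case
    by (simp add: a_def add_ac)
qed (use x_lt_1 in simp)

lemma connector_le_left_1: "n \<ge> 1 \<Longrightarrow> connector x n m \<le> connector x 1 m"
proof (induction n rule: dec_induct)
  case (step n)
  have "(real (Suc n) - x) / (real (Suc n) - x + real m) \<le> 1"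
    using x_lt_1 by (simp add: divide_le_eq_1)
  then have "connector x (Suc n) m \<le> connector x n m"
    unfolding connector_Suc_left by (rule mult_left_le) (simp_all add: connector_nonneg)
  then show ?case
    using step.IH by linarith
qed simp

lemma connector_le_right_1: "m \<ge> 1 \<Longrightarrow> connector x n m \<le> connector x n 1"
  unfolding connector_def using x_lt_1
  by (intro prod_mono conjI divide_nonneg_nonneg divide_left_mono) auto

lemma connector_tendsto_left: "m \<ge> 1 \<Longrightarrow> (\<lambda>n. connector x n m) \<longlonglongrightarrow> 0"
proof (rule tendsto_sandwich[where f = "\<lambda>_. 0" and h = "\<lambda>n. (1 - x) / (real n + 1 - x)"])
  show "(\<lambda>n. (1 - x) / (real n + 1 - x)) \<longlonglongrightarrow> 0"
    by real_asymp
qed (use connector_nonneg connector_le_right_1 connector_1_right in auto)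

lemma connector_tendsto_right: "n \<ge> 1 \<Longrightarrow> (\<lambda>m. connector x n m) \<longlonglongrightarrow> 0"
proof (rule tendsto_sandwich[where f = "\<lambda>_. 0" and h = "\<lambda>m. (1 - x) / (1 - x + real m)"])
  show "(\<lambda>m. (1 - x) / (1 - x + real m)) \<longlonglongrightarrow> 0"
    by real_asymp
qed (use connector_nonneg connector_le_left_1 connector_1_left in auto)

lemma connector_Suc_right:
  "connector x n m * (real m + 1 - x) = connector x n (Suc m) * (real n + real m + 1 - x)"
proof (induction n)
  case (Suc n)
  have pos: "real n + 1 - x > 0" "real n + real m + 1 - x > 0" "real n + real m + 2 - x > 0"
    using x_lt_1 by auto
  have "connector x (Suc n) m * (real m + 1 - x)
      = connector x n m * (real m + 1 - x) * ((real n + 1 - x) / (real n + 1 - x + real m))"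
    by (simp only: connector_Suc_left of_nat_Suc) (simp add: mult_ac add_ac)
  also have "\<dots> = connector x n (Suc m) * (real n + real m + 1 - x) * ((real n + 1 - x) / (real n + 1 - x + real m))"
    by (simp add: Suc.IH)
  also have "\<dots> = connector x n (Suc m) * (real n + 1 - x)"
    using pos by (simp add: field_simps)
  also have "\<dots> = connector x (Suc n) (Suc m) * (real (Suc n) + real m + 1 - x)"
    using pos by (simp add: connector_Suc_left field_simps)
  finally show ?case .
qed simp

lemma has_sum_connector_left:
  assumes "m \<ge> 1"
  shows "((\<lambda>n. connector x n m / (real n - x)) has_sum (connector x l m / real m)) {Suc l..}"
proof (rule sums_shift_imp_has_sum_atLeast)
  define f where "f k = - connector x (k + l) m / real m" for k
  have "(\<lambda>k. f (Suc k) - f k) sums (0 - f 0)"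
  proof (rule telescope_sums)
    have "(\<lambda>k. connector x (k + l) m) \<longlonglongrightarrow> 0"
      using connector_tendsto_left[OF assms] by (rule LIMSEQ_ignore_initial_segment)
    then show "f \<longlonglongrightarrow> 0"
      unfolding f_def using tendsto_divide_zero tendsto_minus by fastforce
  qed
  moreover have "f (Suc k) - f k = connector x (k + Suc l) m / (real (k + Suc l) - x)" for k
  proof -
    define a where "a = real (Suc (k + l)) - x"
    define c where "c = connector x (k + l) m"
    have "a > 0" "real m > 0" "a + real m > 0"
      using x_lt_1 assms by (simp_all add: a_def)
    have "f (Suc k) - f k = (c - c * (a / (a + real m))) / real m"
      by (simp add: f_def connector_Suc_left a_def c_def diff_divide_distrib)
    also have "c - c * (a / (a + real m)) = c * real m / (a + real m)"
      using \<open>a + real m > 0\<close> by (simp add: field_simps)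
    also have "\<dots> / real m = c / (a + real m)"
      using \<open>real m > 0\<close> by simp
    also have "\<dots> = c * (a / (a + real m)) / a"
      using \<open>a > 0\<close> by simp
    finally show ?thesis
      by (simp add: connector_Suc_left a_def c_def)
  qed
  ultimately show "(\<lambda>k. connector x (k + Suc l) m / (real (k + Suc l) - x)) sums (connector x l m / real m)"
    by (simp add: f_def)
qed (use connector_nonneg x_lt_1 in auto)

lemma has_sum_connector_right:
  assumes "n \<ge> 1"
  shows "((\<lambda>m. connector x n m / (real m - x)) has_sum (1 / real n)) {1..}"
proof (rule sums_shift_imp_has_sum_atLeast)
  define f where "f k = - connector x n k / real n" for k
  have "(\<lambda>k. f (Suc k) - f k) sums (0 - f 0)"
  proof (rule telescope_sums)
    show "f \<longlonglongrightarrow> 0"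
      unfolding f_def using connector_tendsto_right[OF assms] tendsto_divide_zero tendsto_minus
      by fastforce
  qed
  moreover have "f (Suc k) - f k = connector x n (k + 1) / (real (k + 1) - x)" for k
  proof -
    have pos: "real k + 1 - x > 0" "real n + real k + 1 - x > 0"
      using x_lt_1 by auto
    have "connector x n k = connector x n (Suc k) * (real n + real k + 1 - x) / (real k + 1 - x)"
      using connector_Suc_right[of n k] pos by (simp add: field_simps)
    then show ?thesis
      using pos assms by (simp add: f_def field_simps)
  qed
  ultimately show "(\<lambda>k. connector x n (k + 1) / (real (k + 1) - x)) sums (1 / real n)"
    by (simp add: f_def)
qed (use connector_nonneg x_lt_1 in auto)

lemma shifted_esym_nonneg: "0 \<le> shifted_esym x k n"
  by (induction k arbitrary: n) (use x_lt_1 in \<open>auto intro!: sum_nonneg divide_nonneg_pos\<close>)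

lemma has_sum_shifted_esym_connector:
  assumes "m \<ge> 1"
  shows "((\<lambda>n. shifted_esym x k n * connector x n m / (real n - x)) has_sum (1 / real m ^ (k + 1))) {1..}"
proof (induction k)
  case 0
  show ?case
    using has_sum_connector_left[OF assms, of 0] by simp
next
  case (Suc k)
  define f where "f = (\<lambda>(l, n). shifted_esym x k l / (real l - x) * (connector x n m / (real n - x)))"
  have "(f has_sum (1 / real m ^ (Suc k + 1))) (SIGMA l:{1..}. {Suc l..})"
  proof (rule has_sum_Sigma_nonneg)
    show "f (l, n) \<ge> 0" if "l \<in> {1..}" "n \<in> {Suc l..}" for l n
      using that x_lt_1 connector_nonneg shifted_esym_nonneg by (auto simp: f_def)
    show "((\<lambda>n. f (l, n)) has_sum (shifted_esym x k l / (real l - x) * (connector x l m / real m))) {Suc l..}"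
      for l
      unfolding f_def prod.case by (rule has_sum_cmult_right[OF has_sum_connector_left[OF assms]])
    have "((\<lambda>l. (shifted_esym x k l * connector x l m / (real l - x)) * (1 / real m)) has_sum
             (1 / real m ^ (k + 1) * (1 / real m))) {1..}"
      by (rule has_sum_cmult_left[OF Suc])
    then show "((\<lambda>l. shifted_esym x k l / (real l - x) * (connector x l m / real m))
                 has_sum (1 / real m ^ (Suc k + 1))) {1..}"
      by (simp add: field_simps)
  qed
  then have "((\<lambda>(n, l). f (l, n)) has_sum (1 / real m ^ (Suc k + 1))) (SIGMA n:{1..}. {1..<n})"
    by (subst has_sum_reindex_bij_witness[where i = "\<lambda>(l, n). (n, l)" and j = "\<lambda>(n, l). (l, n)"
          and T = "SIGMA l:{1..}. {Suc l..}" and h = f]) auto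
  then have "((\<lambda>n. \<Sum>l\<in>{1..<n}. f (l, n)) has_sum (1 / real m ^ (Suc k + 1))) {1..}"
    by (rule has_sum_SigmaD) auto
  moreover have "(\<Sum>l\<in>{1..<n}. f (l, n)) = shifted_esym x (Suc k) n * connector x n m / (real n - x)" for n
    unfolding f_def prod.case shifted_esym.simps sum_distrib_right[symmetric] by simp
  ultimately show ?case by simp
qed

end

lemma summable_on_inverse_power_shifted:
  fixes x :: real
  assumes "0 \<le> x" "x < 1" "d \<ge> 1"
  shows "(\<lambda>m. 1 / (real m ^ d * (real m - x))) summable_on {1..}"
proof (rule summable_on_comparison_test)
  have "(\<lambda>m. inverse (real m ^ 2)) summable_on UNIV"
    by (intro summable_nonneg_imp_summable_on inverse_power_summable) auto
  then show "(\<lambda>m. 1 / (1 - x) * inverse (real m ^ 2)) summable_on {1..}"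
    by (intro summable_on_cmult_right) (rule summable_on_subset_banach, auto)
  show "1 / (real m ^ d * (real m - x)) \<le> 1 / (1 - x) * inverse (real m ^ 2)" if "m \<in> {1..}" for m
  proof -
    have "real m \<le> real m ^ d"
      using power_increasing[of 1 d "real m"] that assms by simp
    moreover have "(1 - x) * real m \<le> real m - x"
      using mult_left_mono[of 1 "real m" x] that assms by (simp add: algebra_simps)
    ultimately have "(1 - x) * real m ^ 2 \<le> real m ^ d * (real m - x)"
      using that assms by (simp add: power2_eq_square mult_mono mult.left_commute)
    then show ?thesis
      using that assms by (simp add: divide_simps power2_eq_square)
  qed
qed (use assms in auto)

lemma has_sum_shifted_esym_over_square:
  fixes x :: real
  assumes "0 \<le> x" "x < 1" "d \<ge> 1"
  shows "((\<lambda>n. shifted_esym x (d - 1) n / (real n * (real n - x))) has_sum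
           infsum (\<lambda>m. 1 / (real m ^ d * (real m - x))) {1..}) {1..}"
proof -
  define g where "g m = 1 / (real m ^ d * (real m - x))" for m
  define f where "f = (\<lambda>(m, n). shifted_esym x (d - 1) n / (real n - x) * (connector x n m / (real m - x)))"
  have "(f has_sum infsum g {1..}) (SIGMA m:{1..}. {1..})"
  proof (rule has_sum_Sigma_nonneg)
    show "f (m, n) \<ge> 0" if "m \<in> {1..}" "n \<in> {1..}" for m n
      using that assms connector_nonneg shifted_esym_nonneg by (auto simp: f_def)
    show "((\<lambda>n. f (m, n)) has_sum g m) {1..}" if "m \<in> {1..}" for m
      using has_sum_cmult_left[OF has_sum_shifted_esym_connector[of x m "d - 1"], of "1 / (real m - x)"]
        that assms by (simp add: f_def g_def)
    show "(g has_sum infsum g {1..}) {1..}"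
      unfolding g_def using summable_on_inverse_power_shifted[OF assms] by simp
  qed
  then have "((\<lambda>(n, m). f (m, n)) has_sum infsum g {1..}) (SIGMA n:{1..}. {1..})"
    by (subst has_sum_reindex_bij_witness[where i = "\<lambda>(m, n). (n, m)" and j = "\<lambda>(n, m). (m, n)"
          and T = "SIGMA m:{1..}. {1..}" and h = f]) auto
  then show ?thesis
    unfolding g_def
  proof (rule has_sum_SigmaD)
    show "((\<lambda>m. case (n, m) of (n, m) \<Rightarrow> f (m, n)) has_sum
            shifted_esym x (d - 1) n / (real n * (real n - x))) {1..}" if "n \<in> {1..}" for n
      using has_sum_cmult_right[OF has_sum_connector_right[of x n],
          of "shifted_esym x (d - 1) n / (real n - x)"] that assms
      by (simp add: f_def mult.commute)
  qed
qed

section \<open>The sum theorem\<close>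

lemma shifted_esym_eq_sum:
  "shifted_esym x p n = (\<Sum>ms\<in>dec_tuples_le (n - 1) p. \<Prod>m\<leftarrow>ms. 1 / (real m - x))"
proof (induction p arbitrary: n)
  case (Suc p)
  have "(\<Sum>ms\<in>dec_tuples_le (n - 1) (Suc p). \<Prod>m\<leftarrow>ms. 1 / (real m - x))
      = (\<Sum>l\<in>{1..n - 1}. \<Sum>ms\<in>dec_tuples_le (l - 1) p. \<Prod>m\<leftarrow>l # ms. 1 / (real m - x))"
    unfolding dec_tuples_le_Suc by (rule sum_Cons_set) (auto simp: finite_dec_tuples_le)
  also have "\<dots> = (\<Sum>l\<in>{1..<n}. shifted_esym x p l / (real l - x))"
    by (intro sum.cong) (auto simp: Suc sum_divide_distrib)
  finally show ?case by simp
qed simp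

lemma has_sum_pos_lists_zeta_term:
  assumes "0 \<le> y" "\<forall>n\<in>set ns. y < real n"
  shows "((\<lambda>b. zeta_term y b ns) has_sum (\<Prod>n\<leftarrow>ns. y / (real n - y))) (pos_lists (length ns))"
  using assms(2)
proof (induction ns)
  case Nil
  show ?case by (rule has_sum_finiteI) simp_all
next
  case (Cons n ns)
  have q: "0 \<le> y / real n" "y / real n < 1" "(y / real n) ^ 1 / (1 - y / real n) = y / (real n - y)"
    using Cons.prems assms(1) by (auto simp: field_simps)
  have "((\<lambda>l. (y / real n) ^ hd l * zeta_term y (tl l) ns) has_sum
          ((y / real n) ^ 1 / (1 - y / real n) * (\<Prod>n\<leftarrow>ns. y / (real n - y))))
          {l. l \<noteq> [] \<and> hd l \<in> {1..} \<and> tl l \<in> pos_lists (length ns)}"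
    by (rule has_sum_Cons_mult[OF has_sum_geometric_from[OF q(1,2)] Cons.IH])
      (use Cons.prems assms(1) q in \<open>auto intro: zeta_term_nonneg\<close>)
  then show ?case
    unfolding q(3) length_Cons pos_lists_Suc list.map prod_list.Cons
    by (rule has_sum_cong[THEN iffD1, rotated]) (auto simp: zeta_term_Cons neq_Nil_conv)
qed

lemma has_sum_admissible_zeta_term:
  assumes "0 \<le> y" "\<forall>n\<in>set (m # ns). y < real n"
  shows "((\<lambda>a. zeta_term y a (m # ns)) has_sum
           (y ^ 2 / (real m * (real m - y)) * (\<Prod>n\<leftarrow>ns. y / (real n - y))))
         (admissible (Suc (length ns)))"
proof -
  have q: "0 \<le> y / real m" "y / real m < 1" "(y / real m) ^ 2 / (1 - y / real m) = y ^ 2 / (real m * (real m - y))"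
    using assms by (auto simp: field_simps power2_eq_square)
  have "((\<lambda>l. (y / real m) ^ hd l * zeta_term y (tl l) ns) has_sum
          ((y / real m) ^ 2 / (1 - y / real m) * (\<Prod>n\<leftarrow>ns. y / (real n - y))))
          {l. l \<noteq> [] \<and> hd l \<in> {2..} \<and> tl l \<in> pos_lists (length ns)}"
    by (rule has_sum_Cons_mult[OF has_sum_geometric_from[OF q(1,2)] has_sum_pos_lists_zeta_term])
      (use assms q in \<open>auto intro: zeta_term_nonneg\<close>)
  then show ?thesis
    unfolding q(3) admissible_Suc
    by (rule has_sum_cong[THEN iffD1, rotated]) (auto simp: zeta_term_Cons neq_Nil_conv)
qed

lemma mzv_singleton: "mzv [w] = infsum (\<lambda>m. (1 / real m) ^ w) {1..}"
  unfolding mzv_eq_infsum_zeta_term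
proof (rule infsum_reindex_bij_witness[where i = "\<lambda>m. [m]" and j = "\<lambda>ns. hd ns"])
  show "ns \<in> dec_tuples (length [w]) \<Longrightarrow> [hd ns] = ns" for ns
    by (cases ns) (auto simp: dec_tuples_def)
  show "ns \<in> dec_tuples (length [w]) \<Longrightarrow> (1 / real (hd ns)) ^ w = zeta_term 1 [w] ns" for ns
    by (cases ns) (auto simp: dec_tuples_def zeta_term_def)
  show "ns \<in> dec_tuples (length [w]) \<Longrightarrow> hd ns \<in> {1..}" for ns
    by (cases ns) (auto simp: dec_tuples_def)
qed (auto simp: dec_tuples_def)

text \<open>
  The generating function \<open>\<Sum> \<zeta>(a) x^wt(a)\<close> over admissible indices of depth \<open>d\<close>, in the
  closed form that both sides of the sum theorem are shown to have.
\<close>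

definition mzv_genfun :: "nat \<Rightarrow> real \<Rightarrow> real" where
  "mzv_genfun d x = x ^ (d + 1) * infsum (\<lambda>m. 1 / (real m ^ d * (real m - x))) {1..}"

context
  fixes x :: real
  assumes x_pos: "0 < x" and x_lt_1: "x < 1"
begin

lemma has_sum_dec_tuples_admissible_series:
  "((\<lambda>ns. x ^ 2 / (real (hd ns) * (real (hd ns) - x)) * (\<Prod>n\<leftarrow>tl ns. x / (real n - x)))
     has_sum mzv_genfun (Suc p) x) (dec_tuples (Suc p))"
proof -
  define g where "g ns = x ^ 2 / (real (hd ns) * (real (hd ns) - x)) * (\<Prod>n\<leftarrow>tl ns. x / (real n - x))"
    for ns
  have g_nonneg: "g (m # ms) \<ge> 0" if "m \<ge> 1" "\<forall>n\<in>set ms. n \<ge> 1" for m ms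
    using that x_pos x_lt_1 unfolding g_def
    by (intro mult_nonneg_nonneg divide_nonneg_pos prod_list_nonneg) force+
  have g_sum: "(\<Sum>ms\<in>dec_tuples_le (m - 1) p. g (m # ms))
      = x ^ (Suc p + 1) * (shifted_esym x (Suc p - 1) m / (real m * (real m - x)))" for m
  proof -
    have "(\<Prod>n\<leftarrow>ms. x / (real n - x)) = x ^ p * (\<Prod>n\<leftarrow>ms. 1 / (real n - x))"
      if "length ms = p" for ms :: "nat list"
      using that by (induction ms arbitrary: p) auto
    then have "(\<Sum>ms\<in>dec_tuples_le (m - 1) p. g (m # ms))
        = (\<Sum>ms\<in>dec_tuples_le (m - 1) p. x ^ 2 / (real m * (real m - x)) * x ^ p * (\<Prod>n\<leftarrow>ms. 1 / (real n - x)))"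
      by (intro sum.cong) (auto simp: g_def dec_tuples_le_def)
    then show ?thesis
      by (simp add: shifted_esym_eq_sum sum_distrib_left sum_divide_distrib power_add power2_eq_square mult_ac)
  qed
  have "(g has_sum mzv_genfun (Suc p) x) (dec_tuples (Suc p))"
    unfolding dec_tuples_Suc
  proof (subst has_sum_Cons_iff)
    show "((\<lambda>m. \<Sum>ms\<in>dec_tuples_le (m - 1) p. g (m # ms)) has_sum mzv_genfun (Suc p) x) {1..}"
      unfolding g_sum mzv_genfun_def
      using x_pos x_lt_1 by (intro has_sum_cmult_right has_sum_shifted_esym_over_square) auto
    show "g l \<ge> 0" if "l \<noteq> []" "hd l \<in> {1..}" "tl l \<in> dec_tuples_le (hd l - 1) p" for l
      using that g_nonneg[of "hd l" "tl l"] by (auto simp: dec_tuples_le_def)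
  qed (rule finite_dec_tuples_le)
  then show ?thesis
    by (rule has_sum_cong[THEN iffD1, rotated]) (simp add: g_def)
qed

lemma has_sum_zeta_term_pairs:
  "((\<lambda>(a, ns). zeta_term x a ns) has_sum mzv_genfun (Suc p) x) (SIGMA a:admissible (Suc p). dec_tuples (Suc p))"
proof -
  have "((\<lambda>(ns, a). zeta_term x a ns) has_sum mzv_genfun (Suc p) x)
               (SIGMA ns:dec_tuples (Suc p). admissible (Suc p))"
  proof (rule has_sum_Sigma_nonneg[OF _ _ has_sum_dec_tuples_admissible_series])
    show "((\<lambda>a. case (ns, a) of (ns, a) \<Rightarrow> zeta_term x a ns) has_sum
            x ^ 2 / (real (hd ns) * (real (hd ns) - x)) * (\<Prod>n\<leftarrow>tl ns. x / (real n - x))) (admissible (Suc p))"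
      if ns_dec: "ns \<in> dec_tuples (Suc p)" for ns
    proof -
      obtain m ms where ns: "ns = m # ms" "length ms = p"
        using ns_dec by (cases ns) (auto simp: dec_tuples_def)
      have "\<forall>n\<in>set (m # ms). x < real n"
        using ns_dec ns x_lt_1 by (force simp: dec_tuples_def)
      from has_sum_admissible_zeta_term[OF _ this] x_pos show ?thesis
        by (simp add: ns)
    qed
  qed (use x_pos in \<open>auto intro: zeta_term_nonneg\<close>)
  then show ?thesis
    by (subst has_sum_reindex_bij_witness[where i = "\<lambda>(a, b). (b, a)" and j = "\<lambda>(a, b). (b, a)"
          and T = "SIGMA ns:dec_tuples (Suc p). admissible (Suc p)" and h = "\<lambda>(ns, a). zeta_term x a ns"]) auto
qed

lemma has_sum_mzv_admissible_Suc:
  assumes "a \<in> admissible (Suc p)"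
  shows "(zeta_term 1 a has_sum mzv a) (dec_tuples (Suc p))"
proof -
  have "(\<lambda>ns. zeta_term x a ns) summable_on dec_tuples (Suc p)"
    using summable_on_SigmaD1[OF has_sum_imp_summable[OF has_sum_zeta_term_pairs] assms] by simp
  then have "(\<lambda>ns. (1 / x ^ sum_list a) * zeta_term x a ns) summable_on dec_tuples (Suc p)"
    by (rule summable_on_cmult_right)
  then have "zeta_term 1 a summable_on dec_tuples (Suc p)"
    using x_pos by (simp add: zeta_term_scale[of x])
  moreover have "length a = Suc p"
    using assms by (simp add: admissible_def pos_lists_def)
  ultimately show ?thesis
    by (simp add: mzv_eq_infsum_zeta_term)
qed

lemma has_sum_admissible_weight_genfun:
  "((\<lambda>w. (\<Sum>a\<in>admissible_weight w (Suc p). mzv a) * x ^ w) has_sum mzv_genfun (Suc p) x) UNIV"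
proof -
  have "((\<lambda>a. x ^ sum_list a * mzv a) has_sum mzv_genfun (Suc p) x) (admissible (Suc p))"
  proof (rule has_sum_SigmaD[OF has_sum_zeta_term_pairs])
    show "((\<lambda>ns. case (a, ns) of (a, ns) \<Rightarrow> zeta_term x a ns) has_sum x ^ sum_list a * mzv a)
            (dec_tuples (Suc p))" if "a \<in> admissible (Suc p)" for a
      using has_sum_cmult_right[OF has_sum_mzv_admissible_Suc[OF that], of "x ^ sum_list a"]
      by (simp add: zeta_term_scale[of x])
  qed
  then have "((\<lambda>(w, a). x ^ sum_list a * mzv a) has_sum mzv_genfun (Suc p) x)
               (SIGMA w:UNIV. admissible_weight w (Suc p))"
    by (subst has_sum_reindex_bij_witness[where j = "\<lambda>(w, a). a" and i = "\<lambda>a. (sum_list a, a)"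
          and T = "admissible (Suc p)" and h = "\<lambda>a. x ^ sum_list a * mzv a"]) (auto simp: admissible_weight_def)
  then have "((\<lambda>w. \<Sum>a\<in>admissible_weight w (Suc p). x ^ sum_list a * mzv a) has_sum mzv_genfun (Suc p) x) UNIV"
    by (rule has_sum_SigmaD) (auto simp: finite_admissible_weight)
  moreover have "(\<Sum>a\<in>admissible_weight w (Suc p). x ^ sum_list a * mzv a)
                  = (\<Sum>a\<in>admissible_weight w (Suc p). mzv a) * x ^ w" for w
  proof -
    have "(\<Sum>a\<in>admissible_weight w (Suc p). x ^ sum_list a * mzv a)
        = (\<Sum>a\<in>admissible_weight w (Suc p). mzv a * x ^ w)"
      by (intro sum.cong) (auto simp: admissible_weight_def)
    then show ?thesis
      by (simp add: sum_distrib_right)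
  qed
  ultimately show ?thesis
    by simp
qed

lemma has_sum_zeta_genfun:
  "((\<lambda>w. (if Suc p + 1 \<le> w then mzv [w] else 0) * x ^ w) has_sum mzv_genfun (Suc p) x) UNIV"
proof -
  have "((\<lambda>(m, w). (x / real m) ^ w) has_sum mzv_genfun (Suc p) x) (SIGMA m:{1..}. {Suc p + 1..})"
  proof (rule has_sum_Sigma_nonneg)
    show "((\<lambda>w. case (m, w) of (m, w) \<Rightarrow> (x / real m) ^ w) has_sum
            x ^ (Suc p + 1) * (1 / (real m ^ Suc p * (real m - x)))) {Suc p + 1..}" if "m \<in> {1..}" for m
    proof -
      have "real m > 0" "real m - x > 0" "0 \<le> x / real m" "x / real m < 1"
        using that x_pos x_lt_1 by auto
      then show ?thesis
        using has_sum_geometric_from[of "x / real m" "Suc p + 1"] by (simp add: field_simps power_add)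
    qed
    show "((\<lambda>m. x ^ (Suc p + 1) * (1 / (real m ^ Suc p * (real m - x)))) has_sum mzv_genfun (Suc p) x) {1..}"
      unfolding mzv_genfun_def
      using summable_on_inverse_power_shifted[of x "Suc p"] x_pos x_lt_1
      by (intro has_sum_cmult_right) auto
  qed (use x_pos in simp)
  then have swapped: "((\<lambda>(w, m). (x / real m) ^ w) has_sum mzv_genfun (Suc p) x) (SIGMA w:{Suc p + 1..}. {1..})"
    by (subst has_sum_reindex_bij_witness[where i = "\<lambda>(a, b). (b, a)" and j = "\<lambda>(a, b). (b, a)"
          and T = "SIGMA m:{1..}. {Suc p + 1..}" and h = "\<lambda>(m, w). (x / real m) ^ w"]) auto
  have "((\<lambda>w. x ^ w * mzv [w]) has_sum mzv_genfun (Suc p) x) {Suc p + 1..}"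
  proof (rule has_sum_SigmaD[OF swapped])
    show "((\<lambda>m. case (w, m) of (w, m) \<Rightarrow> (x / real m) ^ w) has_sum x ^ w * mzv [w]) {1..}"
      if "w \<in> {Suc p + 1..}" for w
    proof -
      have "(\<lambda>m. (x / real m) ^ w) summable_on {1..}"
        using summable_on_SigmaD1[OF has_sum_imp_summable[OF swapped] that] by simp
      then have "(\<lambda>m. (1 / x ^ w) * (x / real m) ^ w) summable_on {1..}"
        by (rule summable_on_cmult_right)
      then have "((\<lambda>m. (1 / real m) ^ w) has_sum mzv [w]) {1..}"
        using x_pos by (simp add: mzv_singleton power_divide)
      from has_sum_cmult_right[OF this, of "x ^ w"] show ?thesis
        by (simp add: power_divide)
    qed
  qed
  then show ?thesis
    by (rule has_sum_cong_neutral[THEN iffD1, rotated -1]) auto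
qed

end

lemma has_sum_mzv:
  assumes "a \<in> admissible d"
  shows "(zeta_term 1 a has_sum mzv a) (dec_tuples d)"
proof -
  obtain p where "d = Suc p"
    using assms by (cases d) (auto simp: admissible_def pos_lists_def)
  then show ?thesis
    using has_sum_mzv_admissible_Suc[of "1/2" a p] assms by simp
qed

theorem sum_admissible_weight_mzv:
  assumes "d \<ge> 1" "w \<ge> d + 1"
  shows "(\<Sum>a\<in>admissible_weight w d. mzv a) = mzv [w]"
proof -
  obtain p where d: "d = Suc p"
    using assms by (cases d) auto
  have "(\<lambda>w. \<Sum>a\<in>admissible_weight w (Suc p). mzv a) = (\<lambda>w. if Suc p + 1 \<le> w then mzv [w] else 0)"
  proof (rule powser_coeffs_unique[where r = "1/2" and S = "mzv_genfun (Suc p)"])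
    fix y :: real
    assume "0 < y" "y \<le> 1/2"
    then show "(\<lambda>w. (\<Sum>a\<in>admissible_weight w (Suc p). mzv a) * y ^ w) sums mzv_genfun (Suc p) y"
      and "(\<lambda>w. (if Suc p + 1 \<le> w then mzv [w] else 0) * y ^ w) sums mzv_genfun (Suc p) y"
      by (simp_all only: has_sum_imp_sums has_sum_admissible_weight_genfun has_sum_zeta_genfun)
  qed simp
  from fun_cong[OF this, of w] show ?thesis
    using assms by (simp add: d)
qed

section \<open>Elementary and complete symmetric functions\<close>

lemma esym_0_right: "esym j 0 = (if j = 0 then 1 else 0)"
proof -
  have "{S. S \<subseteq> {1..0::nat} \<and> card S = j} = (if j = 0 then {{}} else {})"
    by auto
  then show ?thesis
    unfolding esym_def by simp
qed

lemma esym_0_left: "esym 0 m = 1"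
proof -
  have "{S. S \<subseteq> {1..m} \<and> card S = 0} = {{}}"
    by (auto dest: finite_subset)
  then show ?thesis
    unfolding esym_def by simp
qed

lemma esym_Suc_Suc: "esym (Suc j) (Suc m) = esym (Suc j) m + esym j m / real (Suc m)"
proof -
  define e where "e k S = (if card S = k then \<Prod>r\<in>S. 1 / real r else 0)" for k and S :: "nat set"
  have esym_Pow: "esym k n = (\<Sum>S\<in>Pow {1..n}. e k S)" for k n
    unfolding esym_def e_def by (subst sum.inter_filter[symmetric]) (auto intro: arg_cong2[where f = sum])
  have Pow_Suc: "Pow {1..Suc m} = Pow {1..m} \<union> insert (Suc m) ` Pow {1..m}"
    by (simp add: atLeastAtMostSuc_conv Pow_insert)
  have "inj_on (insert (Suc m)) (Pow {1..m})"
    by (rule inj_onI) (metis PowD atLeastAtMost_iff Diff_insert_absorb not_less_eq_eq subset_iff order_refl)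
  moreover have "e (Suc j) (insert (Suc m) S) = e j S / real (Suc m)" if "S \<subseteq> {1..m}" for S
  proof -
    have "finite S" "Suc m \<notin> S"
      using that finite_subset by auto
    then show ?thesis
      by (simp add: e_def)
  qed
  ultimately have "(\<Sum>S\<in>insert (Suc m) ` Pow {1..m}. e (Suc j) S) = (\<Sum>S\<in>Pow {1..m}. e j S / real (Suc m))"
    by (simp add: sum.reindex)
  moreover have "esym (Suc j) (Suc m)
      = (\<Sum>S\<in>Pow {1..m}. e (Suc j) S) + (\<Sum>S\<in>insert (Suc m) ` Pow {1..m}. e (Suc j) S)"
    unfolding esym_Pow Pow_Suc by (rule sum.union_disjoint) auto
  ultimately show ?thesis
    by (simp add: esym_Pow sum_divide_distrib)
qed

lemma hsym_eq_multisets_of_size: "hsym i m = (\<Sum>M\<in>multisets_of_size {1..m} i. \<Prod>r\<in>#M. 1 / real r)"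
  unfolding hsym_def multisets_of_size_def ..

lemma hsym_0_right: "hsym i 0 = (if i = 0 then 1 else 0)"
  unfolding hsym_eq_multisets_of_size by (cases "i = 0") auto

lemma hsym_Suc: "hsym i (Suc m) = (\<Sum>t\<le>i. hsym (i - t) m * (1 / real (Suc m)) ^ t)"
proof -
  have "bij_betw (\<lambda>(t, X). X + replicate_mset t (Suc m))
      (SIGMA t:{0..i}. multisets_of_size {1..m} (i - t)) (multisets_of_size {1..Suc m} i)"
  proof -
    have "{1..Suc m} = insert (Suc m) {1..m}"
      by auto
    then show ?thesis
      by (simp add: bij_betw_multisets_of_size_insert)
  qed
  then have "hsym i (Suc m) = (\<Sum>(t, X)\<in>(SIGMA t:{0..i}. multisets_of_size {1..m} (i - t)).
                                 (\<Prod>r\<in>#X. 1 / real r) * (1 / real (Suc m)) ^ t)"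
    unfolding hsym_eq_multisets_of_size
    by (subst sum.reindex_bij_betw[symmetric]) (auto intro!: sum.cong simp: mult.commute)
  also have "\<dots> = (\<Sum>t\<le>i. hsym (i - t) m * (1 / real (Suc m)) ^ t)"
    by (subst sum.Sigma[symmetric])
      (auto simp: finite_multisets_of_size hsym_eq_multisets_of_size sum_distrib_right atLeast0AtMost)
  finally show ?thesis .
qed

text \<open>
  \<open>msum m p w\<close> is the sum of the monomial quasi-symmetric functions \<open>M\<^sub>c\<close> over all compositions
  \<open>c\<close> of \<open>w\<close> with \<open>p\<close> parts, evaluated at \<open>x\<^sub>r = 1/r\<close> (\<open>r \<le> m\<close>); \<open>msum_top\<close> is the part of
  \<open>msum (Suc m) (Suc q) w\<close> whose largest index equals \<open>Suc m\<close>.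
\<close>

definition msum :: "nat \<Rightarrow> nat \<Rightarrow> nat \<Rightarrow> real" where
  "msum m p w = (\<Sum>ns\<in>dec_tuples_le m p. \<Sum>c\<in>compositions w p. zeta_term 1 c ns)"

definition msum_top :: "nat \<Rightarrow> nat \<Rightarrow> nat \<Rightarrow> real" where
  "msum_top m q w = (\<Sum>ms\<in>dec_tuples_le m q. \<Sum>c\<in>compositions w (Suc q). zeta_term 1 c (Suc m # ms))"

lemma msum_depth_0: "msum m 0 w = (if w = 0 then 1 else 0)"
  by (simp add: msum_def compositions_0)

lemma msum_0: "msum 0 p w = (if p = 0 \<and> w = 0 then 1 else 0)"
  by (cases p) (simp add: msum_depth_0, simp add: msum_def dec_tuples_le_0_Suc)

lemma msum_eq_0: "w < p \<Longrightarrow> msum m p w = 0"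
  by (simp add: msum_def compositions_empty)

lemma msum_Suc_Suc: "msum (Suc m) (Suc q) w = msum m (Suc q) w + msum_top m q w"
  unfolding msum_def msum_top_def by (rule sum_dec_tuples_le_Suc_split)

lemma msum_top_eq: "msum_top m q w = (\<Sum>c\<in>{1..w}. (1 / real (Suc m)) ^ c * msum m q (w - c))"
proof -
  have "msum_top m q w
      = (\<Sum>ms\<in>dec_tuples_le m q. \<Sum>c\<in>{1..w}. \<Sum>c'\<in>compositions (w - c) q. zeta_term 1 (c # c') (Suc m # ms))"
    unfolding msum_top_def compositions_Suc by (intro sum.cong refl sum_Cons_set) (auto simp: finite_compositions)
  also have "\<dots> = (\<Sum>c\<in>{1..w}. (1 / real (Suc m)) ^ c * msum m q (w - c))"
    unfolding msum_def zeta_term_Cons by (subst sum.swap) (simp add: sum_distrib_left)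
  finally show ?thesis .
qed

definition binom_msum :: "nat \<Rightarrow> nat \<Rightarrow> nat \<Rightarrow> real" where
  "binom_msum m j w = (\<Sum>p\<le>w. real (p choose j) * msum m p w)"

lemma binom_msum_eq_sum_atMost: "v \<le> Q \<Longrightarrow> (\<Sum>p\<le>Q. real (p choose j) * msum m p v) = binom_msum m j v"
  unfolding binom_msum_def by (rule sum.mono_neutral_right) (auto simp: msum_eq_0)

lemma binom_msum_eq_0: "v < j \<Longrightarrow> binom_msum m j v = 0"
  unfolding binom_msum_def by (intro sum.neutral) auto

lemma binom_msum_Suc:
  "binom_msum (Suc m) j w = binom_msum m j w +
     (\<Sum>c\<in>{1..w}. (1 / real (Suc m)) ^ c *
        (binom_msum m j (w - c) + (if j = 0 then 0 else binom_msum m (j - 1) (w - c))))"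
proof (cases w)
  case 0
  then show ?thesis by (simp add: binom_msum_def msum_depth_0)
next
  case (Suc w')
  let ?y = "1 / real (Suc m)"
  have "binom_msum (Suc m) j w = binom_msum m j w + (\<Sum>q\<le>w'. real (Suc q choose j) * msum_top m q w)"
    unfolding binom_msum_def Suc sum.atMost_Suc_shift
    by (simp add: msum_depth_0 msum_Suc_Suc algebra_simps sum.distrib)
  also have "(\<Sum>q\<le>w'. real (Suc q choose j) * msum_top m q w)
      = (\<Sum>c\<in>{1..w}. ?y ^ c * (\<Sum>q\<le>w'. real (Suc q choose j) * msum m q (w - c)))"
    unfolding msum_top_eq by (simp add: sum_distrib_left sum_distrib_right sum.swap[of _ "{..w'}"] mult_ac)
  also have "\<dots> = (\<Sum>c\<in>{1..w}. ?y ^ c * (binom_msum m j (w - c) + (if j = 0 then 0 else binom_msum m (j - 1) (w - c))))"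
  proof (intro sum.cong refl)
    fix c
    assume "c \<in> {1..w}"
    then have "w - c \<le> w'"
      using Suc by auto
    have "(\<Sum>q\<le>w'. real (Suc q choose j) * msum m q (w - c))
        = (\<Sum>q\<le>w'. real (q choose j) * msum m q (w - c))
          + (if j = 0 then 0 else \<Sum>q\<le>w'. real (q choose (j - 1)) * msum m q (w - c))"
      by (cases j) (simp_all add: distrib_right sum.distrib)
    then show "?y ^ c * (\<Sum>q\<le>w'. real (Suc q choose j) * msum m q (w - c)) =
        ?y ^ c * (binom_msum m j (w - c) + (if j = 0 then 0 else binom_msum m (j - 1) (w - c)))"
      using \<open>w - c \<le> w'\<close> by (simp add: binom_msum_eq_sum_atMost)
  qed
  finally show ?thesis .
qed

lemma binom_msum_convolution_shift:
  "(\<Sum>t\<in>{1..i}. binom_msum m j (i - t + j) * y ^ t) = (\<Sum>c\<in>{1..i + j}. y ^ c * binom_msum m j (i + j - c))"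
proof -
  have "(\<Sum>c\<in>{1..i + j}. y ^ c * binom_msum m j (i + j - c)) = (\<Sum>c\<in>{1..i}. y ^ c * binom_msum m j (i + j - c))"
    by (rule sum.mono_neutral_right) (auto simp: binom_msum_eq_0)
  also have "\<dots> = (\<Sum>t\<in>{1..i}. binom_msum m j (i - t + j) * y ^ t)"
    by (intro sum.cong) (auto simp: mult.commute)
  finally show ?thesis ..
qed

lemma esym_hsym_eq_binom_msum: "esym j m * hsym i m = binom_msum m j (i + j)"
proof (induction m arbitrary: i j)
  case 0
  then show ?case
    by (auto simp: esym_0_right hsym_0_right binom_msum_def msum_0 intro!: sum.neutral)
next
  case (Suc m)
  let ?y = "1 / real (Suc m)"
  have head_terms: "(\<Sum>t\<le>i. binom_msum m k (i - t + k) * ?y ^ t)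
      = binom_msum m k (i + k) + (\<Sum>c\<in>{1..i + k}. ?y ^ c * binom_msum m k (i + k - c))" for k
    unfolding sum_atMost_eq_head_plus binom_msum_convolution_shift by simp
  show ?case
  proof (cases j)
    case 0
    have "esym j (Suc m) * hsym i (Suc m) = (\<Sum>t\<le>i. binom_msum m 0 (i - t + 0) * ?y ^ t)"
      using Suc.IH[of 0] by (simp add: 0 esym_0_left hsym_Suc)
    then show ?thesis
      unfolding head_terms by (simp add: 0 binom_msum_Suc)
  next
    case (Suc j')
    have "esym j (Suc m) * hsym i (Suc m)
        = (\<Sum>t\<le>i. esym (Suc j') m * hsym (i - t) m * ?y ^ t)
          + (\<Sum>t\<le>i. esym j' m * hsym (i - t) m * ?y ^ Suc t)"
      unfolding Suc esym_Suc_Suc hsym_Suc sum_distrib_left sum.distrib[symmetric]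
      by (intro sum.cong) (simp_all add: algebra_simps)
    also have "(\<Sum>t\<le>i. esym j' m * hsym (i - t) m * ?y ^ Suc t)
        = (\<Sum>t\<in>{0..i}. binom_msum m j' (Suc i - Suc t + j') * ?y ^ Suc t)"
      by (simp add: Suc.IH atMost_atLeast0)
    also have "\<dots> = (\<Sum>t\<in>{1..Suc i}. binom_msum m j' (Suc i - t + j') * ?y ^ t)"
      unfolding One_nat_def by (rule sum.shift_bounds_cl_Suc_ivl[symmetric])
    also have "\<dots> = (\<Sum>c\<in>{1..Suc i + j'}. ?y ^ c * binom_msum m j' (Suc i + j' - c))"
      by (rule binom_msum_convolution_shift)
    finally show ?thesis
      using head_terms[of j] Suc.IH by (simp add: Suc binom_msum_Suc sum.distrib distrib_left)
  qed
qed

section \<open>Splitting by the first entry\<close>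

definition S2 :: "nat \<Rightarrow> nat \<Rightarrow> real" where
  "S2 N d = (\<Sum>a\<in>{a \<in> admissible_weight N d. hd a = 2}. mzv a)"

lemma ST_eq_sum_admissible_weight: "ST N d = (\<Sum>a\<in>{a \<in> admissible_weight N d. 3 \<le> hd a}. mzv a)"
  unfolding ST_def admissible_weight_def admissible_def pos_lists_def
  by (rule sum.cong) auto

lemma ST_plus_S2:
  assumes "d \<ge> 1" "d + 1 \<le> N"
  shows "ST N d + S2 N d = mzv [N]"
proof -
  have "ST N d + S2 N d
      = (\<Sum>a\<in>{a \<in> admissible_weight N d. 3 \<le> hd a} \<union> {a \<in> admissible_weight N d. hd a = 2}. mzv a)"
    unfolding ST_eq_sum_admissible_weight S2_def
    by (rule sum.union_disjoint[symmetric]) (auto simp: finite_admissible_weight)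
  also have "{a \<in> admissible_weight N d. 3 \<le> hd a} \<union> {a \<in> admissible_weight N d. hd a = 2}
           = admissible_weight N d"
    by (auto simp: admissible_weight_def admissible_def)
  also have "(\<Sum>a\<in>admissible_weight N d. mzv a) = mzv [N]"
    using assms by (intro sum_admissible_weight_mzv) auto
  finally show ?thesis .
qed

lemma ST_depth_1: "n \<ge> 1 \<Longrightarrow> ST (n + 2) 1 = mzv [n + 2]"
proof -
  assume "n \<ge> 1"
  then have "{a. length a = 1 \<and> (\<forall>x\<in>set a. x \<ge> 1) \<and> sum_list a = n + 2 \<and> a \<noteq> [] \<and> hd a \<ge> 3} = {[n + 2]}"
    by (auto simp: length_Suc_conv)
  then show ?thesis
    unfolding ST_def by simp
qed

lemma ST_full_depth: "ST (n + 2) (Suc n) = 0"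
proof -
  have empty: "{a. length a = Suc n \<and> (\<forall>x\<in>set a. x \<ge> 1) \<and> sum_list a = n + 2 \<and> a \<noteq> [] \<and> hd a \<ge> 3} = {}"
  proof safe
    fix a
    assume a: "length a = Suc n" "\<forall>x\<in>set a. x \<ge> 1" "sum_list a = n + 2" "a \<noteq> []" "hd a \<ge> 3"
    then obtain a0 as where "a = a0 # as"
      by (auto simp: neq_Nil_conv)
    then show "a \<in> {}"
      using a length_le_sum_list[of as] by simp
  qed
  show ?thesis
    unfolding ST_def empty by simp
qed

lemma has_sum_mzv_by_largest_index:
  assumes "finite A" "A \<subseteq> admissible (Suc q)"
  shows "((\<lambda>m. \<Sum>ms\<in>dec_tuples_le (m - 1) q. \<Sum>a\<in>A. zeta_term 1 a (m # ms)) has_sum (\<Sum>a\<in>A. mzv a)) {1..}"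
proof -
  have "((\<lambda>ns. \<Sum>a\<in>A. zeta_term 1 a ns) has_sum (\<Sum>a\<in>A. mzv a)) (dec_tuples (Suc q))"
    using assms by (intro has_sum_sum has_sum_mzv) auto
  then show ?thesis
    unfolding dec_tuples_Suc
    by (subst (asm) has_sum_Cons_iff) (auto simp: finite_dec_tuples_le intro!: sum_nonneg zeta_term_nonneg)
qed

lemma has_sum_msum_top_over_square:
  "((\<lambda>m. msum_top (m - 1) q n / real m ^ 2) has_sum ST (n + 2) (Suc q)) {1..}"
proof -
  let ?A = "{a \<in> admissible_weight (n + 2) (Suc q). 3 \<le> hd a}"
  have "(\<Sum>a\<in>?A. zeta_term 1 a (m # ms)) = (\<Sum>c\<in>compositions n (Suc q). (1 / real m) ^ 2 * zeta_term 1 c (m # ms))"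
    for m ms
  proof (rule sum.reindex_bij_witness[where i = "\<lambda>c. (hd c + 2) # tl c" and j = "\<lambda>a. (hd a - 2) # tl a"])
    fix a
    assume "a \<in> ?A"
    then obtain a0 as where a: "a = a0 # as" "a0 \<ge> 3" "a \<in> admissible_weight (n + 2) (Suc q)"
      by (auto simp: admissible_weight_def admissible_def neq_Nil_conv)
    then show "(hd ((hd a - 2) # tl a) + 2) # tl ((hd a - 2) # tl a) = a"
      and "(hd a - 2) # tl a \<in> compositions n (Suc q)"
      by (auto simp: admissible_weight_def admissible_def compositions_def pos_lists_def)
    have "a0 = 2 + (a0 - 2)"
      using a by simp
    then have "(1 / real m) ^ 2 * (1 / real m) ^ (a0 - 2) = (1 / real m) ^ a0"
      by (metis power_add)
    then show "(1 / real m) ^ 2 * zeta_term 1 ((hd a - 2) # tl a) (m # ms) = zeta_term 1 a (m # ms)"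
      by (simp add: a(1) zeta_term_Cons mult.assoc[symmetric])
  next
    fix c
    assume "c \<in> compositions n (Suc q)"
    then show "(hd ((hd c + 2) # tl c) - 2) # tl ((hd c + 2) # tl c) = c"
      and "(hd c + 2) # tl c \<in> ?A"
      by (cases c; auto simp: admissible_weight_def admissible_def compositions_def pos_lists_def)+
  qed
  then have eq: "(\<Sum>ms\<in>dec_tuples_le (m - 1) q. \<Sum>a\<in>?A. zeta_term 1 a (m # ms)) = msum_top (m - 1) q n / real m ^ 2"
    if "m \<ge> 1" for m
    using that by (simp add: msum_top_def sum_distrib_left sum_divide_distrib power_one_over)
  have "((\<lambda>m. \<Sum>ms\<in>dec_tuples_le (m - 1) q. \<Sum>a\<in>?A. zeta_term 1 a (m # ms)) has_sum ST (n + 2) (Suc q)) {1..}"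
    unfolding ST_eq_sum_admissible_weight
    by (rule has_sum_mzv_by_largest_index) (simp add: finite_admissible_weight, auto simp: admissible_weight_def)
  then show ?thesis
    by (rule has_sum_cong[THEN iffD1, rotated]) (rule eq, simp)
qed

lemma has_sum_msum_over_square:
  "((\<lambda>m. msum (m - 1) p n / real m ^ 2) has_sum S2 (n + 2) (Suc p)) {1..}"
proof -
  let ?A = "{a \<in> admissible_weight (n + 2) (Suc p). hd a = 2}"
  have "(\<Sum>a\<in>?A. zeta_term 1 a (m # ms)) = (\<Sum>c\<in>compositions n p. (1 / real m) ^ 2 * zeta_term 1 c ms)"
    for m ms
  proof (rule sum.reindex_bij_witness[where i = "\<lambda>c. 2 # c" and j = tl])
    fix a
    assume "a \<in> ?A"
    then obtain as where a: "a = 2 # as" "a \<in> admissible_weight (n + 2) (Suc p)"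
      by (auto simp: admissible_weight_def admissible_def neq_Nil_conv)
    then show "2 # tl a = a" and "tl a \<in> compositions n p"
      and "(1 / real m) ^ 2 * zeta_term 1 (tl a) ms = zeta_term 1 a (m # ms)"
      by (auto simp: admissible_weight_def admissible_def compositions_def pos_lists_def zeta_term_Cons)
  qed (auto simp: admissible_weight_def admissible_def compositions_def pos_lists_def)
  then have "(\<Sum>ms\<in>dec_tuples_le (m - 1) p. \<Sum>a\<in>?A. zeta_term 1 a (m # ms)) = msum (m - 1) p n / real m ^ 2"
    for m
    by (simp add: msum_def sum_distrib_left sum_divide_distrib power_one_over)
  moreover have "?A \<subseteq> admissible (Suc p)"
    by (auto simp: admissible_weight_def)
  ultimately show ?thesis
    using has_sum_mzv_by_largest_index[of ?A p]
    by (simp add: finite_admissible_weight S2_def)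
qed

lemma esym_hsym_over_square_eq:
  assumes "m \<ge> 1" "n \<ge> 1" "j \<le> n"
  shows "esym j m * hsym (n - j) m / real m ^ 2 =
    (\<Sum>p=1..n. real (p choose j) * (msum_top (m - 1) (p - 1) n / real m ^ 2 + msum (m - 1) p n / real m ^ 2))"
proof -
  have split: "msum m p n = msum_top (m - 1) (p - 1) n + msum (m - 1) p n" if "p \<ge> 1" for p
    using msum_Suc_Suc[of "m - 1" "p - 1" n] that assms by simp
  have "esym j m * hsym (n - j) m = (\<Sum>p=1..n. real (p choose j) * msum m p n)"
    using esym_hsym_eq_binom_msum[of j m "n - j"] assms
    by (simp add: binom_msum_def sum_atMost_eq_head_plus msum_depth_0)
  also have "\<dots> = (\<Sum>p=1..n. real (p choose j) * (msum_top (m - 1) (p - 1) n + msum (m - 1) p n))"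
    by (intro sum.cong) (simp_all add: split)
  finally show ?thesis
    by (simp add: sum_divide_distrib flip: add_divide_distrib)
qed

lemma has_sum_esym_hsym_over_square:
  assumes "n \<ge> 1" "j \<le> n"
  shows "((\<lambda>m. esym j m * hsym (n - j) m / real m ^ 2) has_sum
           (\<Sum>p=1..n. real (p choose j) * (ST (n + 2) p + S2 (n + 2) (Suc p)))) {1..}"
proof -
  have value_eq: "(\<Sum>p=1..n. real (p choose j) * (ST (n + 2) (Suc (p - 1)) + S2 (n + 2) (Suc p)))
      = (\<Sum>p=1..n. real (p choose j) * (ST (n + 2) p + S2 (n + 2) (Suc p)))"
    by (intro sum.cong) auto
  have "((\<lambda>m. \<Sum>p=1..n. real (p choose j) * (msum_top (m - 1) (p - 1) n / real m ^ 2 + msum (m - 1) p n / real m ^ 2))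
          has_sum (\<Sum>p=1..n. real (p choose j) * (ST (n + 2) (Suc (p - 1)) + S2 (n + 2) (Suc p)))) {1..}"
    by (intro has_sum_sum has_sum_cmult_right has_sum_add has_sum_msum_top_over_square has_sum_msum_over_square)
      simp
  then show ?thesis
    unfolding value_eq
    by (rule has_sum_cong[THEN iffD1, rotated]) (use assms esym_hsym_over_square_eq in auto)
qed

lemma sum_choose_telescope:
  fixes T :: "nat \<Rightarrow> real"
  assumes "T (Suc n) = 0"
  shows "(\<Sum>p=1..n. real (p choose j) * (T p - T (Suc p)))
       = (if j = 0 then T 1 else \<Sum>p=j..n. real ((p - 1) choose (j - 1)) * T p)"
proof (cases j)
  case 0
  have "(\<Sum>p=1..n. T p - T (Suc p)) = T 1 - T (Suc n)"
    by (induction n) simp_all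
  with assms 0 show ?thesis
    by simp
next
  case (Suc j')
  have "(\<Sum>p=1..n. real (p choose j) * (T p - T (Suc p)))
      = (\<Sum>p=1..n. real ((p - 1) choose j') * T p) - real (n choose j) * T (Suc n)"
    by (induction n) (simp_all add: Suc algebra_simps)
  also have "\<dots> = (\<Sum>p=j..n. real ((p - 1) choose j') * T p)"
    using assms Suc by (simp, intro sum.mono_neutral_right) auto
  finally show ?thesis
    by (simp add: Suc)
qed

lemma sum_atLeast1_choose: "(\<Sum>p=1..n. real (p choose j)) = real (Suc n choose Suc j) - (if j = 0 then 1 else 0)"
  using sum_atMost_eq_head_plus[of "\<lambda>p. real (p choose j)" n] sum_choose_upper[of j n]
  by (simp flip: of_nat_sum)

theorem mainTheorem12:
  fixes n j :: nat
  assumes "n \<ge> 1" and "j \<le> n"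
  shows "((\<lambda>m. esym j m * hsym (n - j) m / (real m)^2) has_sum
           (if j = 0 then real (n + 1) * mzv [n + 2]
            else (\<Sum>p=j..n. real ((p - 1) choose (j - 1)) * ST (n + 2) p)
                 + real ((n + 1) choose (j + 1)) * mzv [n + 2])) {1..}"
proof -
  define z where "z = mzv [n + 2]"
  define T where "T = ST (n + 2)"
  have T_1: "T 1 = z" and T_top: "T (Suc n) = 0"
    using ST_depth_1[OF assms(1)] ST_full_depth[of n] by (simp_all add: T_def z_def)
  have S2_eq: "S2 (n + 2) (Suc p) = z - T (Suc p)" if "p \<in> {1..n}" for p
    using ST_plus_S2[of "Suc p" "n + 2"] that by (simp add: T_def z_def)
  have "(\<Sum>p=1..n. real (p choose j) * (T p + S2 (n + 2) (Suc p)))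
      = (\<Sum>p=1..n. real (p choose j) * (T p - T (Suc p)) + z * real (p choose j))"
    by (intro sum.cong refl, subst S2_eq) (simp_all add: algebra_simps)
  also have "\<dots> = (\<Sum>p=1..n. real (p choose j) * (T p - T (Suc p))) + z * (\<Sum>p=1..n. real (p choose j))"
    by (simp add: sum.distrib sum_distrib_left)
  also have "\<dots> = (if j = 0 then real (n + 1) * z
                   else (\<Sum>p=j..n. real ((p - 1) choose (j - 1)) * T p) + real ((n + 1) choose (j + 1)) * z)"
    unfolding sum_choose_telescope[of T n, OF T_top] sum_atLeast1_choose T_1 by (simp add: algebra_simps)
  finally show ?thesis
    using has_sum_esym_hsym_over_square[OF assms] unfolding T_def z_def by simp
qed

end
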